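(* Let $(\mathbb X,S)$ be a minimal subshift over a finite alphabet satisfying the Boshernitzan condition, let $(\mathbb X',S')$ be a $p$-periodic subshift, let $T=S\times S'$ on $\mathbb X\times\mathbb X'$, and let $\mathrm s(p)$ be the number of $S^p$-minimal components of $\mathbb X$. The following are equivalent: (a) $(\mathbb X\times\mathbb X',T)$ is topologically conjugate to a minimal subshift satisfying the Boshernitzan condition; (b) $(\mathbb X\times\mathbb X',T)$ is minimal; (c) $\mathrm s(p)=1$; (d) $(\mathbb X,S)$ has no topological eigenvalue of the form $e^{2\pi ik/p}$, $k\in\mathbb Z$, other than $1$.
   Context: A $p$-periodic subshift is the set of all translates of a single $p$-periodic sequence. Boshernitzan condition for a minimal subshift: there is a shift-invariant probability measure $\nu$ with $\limsup_{n}n\min\{\nu[u]:u\in\mathcal L_n(\mathbb X)\}>0$, $\mathcal L_n(\mathbb X)$ the length-$n$ words occurring in $\mathbb X$, $[u]$ the corresponding cylinder set at position $0$. A topological eigenvalue is $z\in\mathbb C$ with $f\circ S=zf$ for some continuous $f\not\equiv0$. An $S^p$-minimal component is a nonempty closed $S^p$-invariant set minimal with these properties. *)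

theory Defs
  imports "HOL-Analysis.Analysis" "HOL-Probability.Probability_Measure"
begin

definition shift :: "(int \<Rightarrow> 'a) \<Rightarrow> (int \<Rightarrow> 'a)" where
  "shift x = (\<lambda>n. x (n + 1))"

definition shift_top :: "(int \<Rightarrow> 'a) topology" where
  "shift_top = product_topology (\<lambda>_. discrete_topology UNIV) UNIV"

definition subshift_on :: "'a set \<Rightarrow> (int \<Rightarrow> 'a) set \<Rightarrow> bool" where
  "subshift_on A X \<longleftrightarrow> X \<noteq> {} \<and> closedin shift_top X \<and> shift ` X = X \<and>
     (\<forall>x\<in>X. range x \<subseteq> A)"

definition minimal_system :: "'a topology \<Rightarrow> 'a set \<Rightarrow> ('a \<Rightarrow> 'a) \<Rightarrow> bool" where
  "minimal_system Tp X f \<longleftrightarrow> X \<noteq> {} \<and> f ` X \<subseteq> X \<and>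
     (\<forall>Z. closedin (subtopology Tp X) Z \<and> Z \<noteq> {} \<and> f ` Z \<subseteq> Z \<longrightarrow> Z = X)"

definition cylinder :: "(int \<Rightarrow> 'a) set \<Rightarrow> 'a list \<Rightarrow> (int \<Rightarrow> 'a) set" where
  "cylinder X u = {x \<in> X. \<forall>i < length u. x (int i) = u ! i}"

definition language :: "(int \<Rightarrow> 'a) set \<Rightarrow> nat \<Rightarrow> 'a list set" where
  "language X n = {u. length u = n \<and> cylinder X u \<noteq> {}}"

definition shift_invariant_prob :: "(int \<Rightarrow> 'a) set \<Rightarrow> (int \<Rightarrow> 'a) measure \<Rightarrow> bool" where
  "shift_invariant_prob X \<nu> \<longleftrightarrow> prob_space \<nu> \<and> space \<nu> = X \<and>
     sets \<nu> = sigma_sets X {U. openin (subtopology shift_top X) U} \<and>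
     (\<forall>B \<in> sets \<nu>. emeasure \<nu> (shift -` B \<inter> X) = emeasure \<nu> B)"

definition boshernitzan :: "(int \<Rightarrow> 'a) set \<Rightarrow> bool" where
  "boshernitzan X \<longleftrightarrow> (\<exists>\<nu>. shift_invariant_prob X \<nu> \<and>
     limsup (\<lambda>n. ereal (real n * Min ((\<lambda>u. measure \<nu> (cylinder X u)) ` language X n))) > 0)"

definition topological_eigenvalue :: "(int \<Rightarrow> 'a) set \<Rightarrow> complex \<Rightarrow> bool" where
  "topological_eigenvalue X z \<longleftrightarrow> (\<exists>f. continuous_map (subtopology shift_top X) euclidean f \<and>
     (\<exists>x\<in>X. f x \<noteq> 0) \<and> (\<forall>x\<in>X. f (shift x) = z * f x))"

definition Sp_minimal_component :: "nat \<Rightarrow> (int \<Rightarrow> 'a) set \<Rightarrow> (int \<Rightarrow> 'a) set \<Rightarrow> bool" where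
  "Sp_minimal_component p X Z \<longleftrightarrow>
     Z \<subseteq> X \<and> Z \<noteq> {} \<and> closedin shift_top Z \<and> (shift ^^ p) ` Z \<subseteq> Z \<and>
     (\<forall>W. W \<subseteq> Z \<and> W \<noteq> {} \<and> closedin shift_top W \<and> (shift ^^ p) ` W \<subseteq> W \<longrightarrow> W = Z)"

definition num_Sp_components :: "nat \<Rightarrow> (int \<Rightarrow> 'a) set \<Rightarrow> nat" where
  "num_Sp_components p X = card {Z. Sp_minimal_component p X Z}"

definition least_period :: "nat \<Rightarrow> (int \<Rightarrow> 'a) \<Rightarrow> bool" where
  "least_period p w \<longleftrightarrow> p > 0 \<and> (\<forall>n. w (n + int p) = w n) \<and>
     (\<forall>q. 0 < q \<and> q < p \<longrightarrow> \<not> (\<forall>n. w (n + int q) = w n))"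

definition orbit_set :: "(int \<Rightarrow> 'a) \<Rightarrow> (int \<Rightarrow> 'a) set" where
  "orbit_set w = {(\<lambda>n. w (n + k)) | k. True}"

definition prod_map :: "((int \<Rightarrow> 'a) \<times> (int \<Rightarrow> 'b)) \<Rightarrow> ((int \<Rightarrow> 'a) \<times> (int \<Rightarrow> 'b))" where
  "prod_map z = (shift (fst z), shift (snd z))"

definition conjugate_prod :: "(int \<Rightarrow> 'a) set \<Rightarrow> (int \<Rightarrow> 'b) set \<Rightarrow> (int \<Rightarrow> nat) set \<Rightarrow> bool" where
  "conjugate_prod X X' Y \<longleftrightarrow> (\<exists>h.
     homeomorphic_map (prod_topology (subtopology shift_top X) (subtopology shift_top X'))
                      (subtopology shift_top Y) h \<and>
     (\<forall>z \<in> X \<times> X'. h (prod_map z) = shift (h z)))"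

end

theory Submission
  imports Defs "HOL-Probability.Probability_Mass_Function"
begin

text \<open>
  Write O for the orbit of w, a set of p points cyclically permuted by the shift.
  A closed invariant subset of X \<times> O is determined by its fibre over w, which is a closed
  S^p-invariant subset of X, and conversely every such subset Z of X yields the closed
  invariant set of all (S^j z, S^j w); so the product is minimal iff X is S^p-minimal,
  which for minimal X means s(p) = 1.
  If X is not S^p-minimal, a minimal S^p-component Z has translates S^i Z, i < d, that
  form a clopen partition of X permuted cyclically by S, with 1 < d and d dividing p; the function
  equal to exp(2\<pi>i j/d) on S^j Z is then a continuous eigenfunction. Conversely, if X is
  S^p-minimal and z^p = 1, a level set of an eigenfunction for z is closed and S^p-invariant,
  hence all of X, which forces z = 1.
  Finally, minimality is invariant under conjugacy, and coding pairs of letters by natural numbers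
  conjugates X \<times> O to a subshift Y over a finite alphabet. Averaging the push-forwards of a
  Boshernitzan measure of X along the p points of O gives an invariant measure on Y whose
  cylinders have at least 1/p times the measure of some cylinder of X of the same length.
\<close>

lemma funpow_image_eq:
  assumes "f ` X = X"
  shows "(f ^^ n) ` X = X"
proof (induction n)
  case (Suc n)
  have "(f ^^ Suc n) ` X = f ` (f ^^ n) ` X"
    by (simp add: image_image)
  with Suc assms show ?case
    by simp
qed simp

lemma funpow_image_subset:
  assumes "f ` C \<subseteq> C"
  shows "(f ^^ n) ` C \<subseteq> C"
proof (induction n)
  case (Suc n)
  have "(f ^^ Suc n) ` C = f ` (f ^^ n) ` C"
    by (simp add: image_image)
  also have "\<dots> \<subseteq> C"
    using Suc assms by blast
  finally show ?case .
qed simp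

lemma funpow_image_mod:
  assumes "(f ^^ d) ` Z = Z"
  shows "(f ^^ n) ` Z = (f ^^ (n mod d)) ` Z"
proof -
  have multiple: "(f ^^ (d * q)) ` Z = Z" for q
  proof (induction q)
    case (Suc q)
    have "(f ^^ (d * Suc q)) ` Z = (f ^^ d) ` (f ^^ (d * q)) ` Z"
      by (simp add: funpow_add image_comp)
    then show ?case
      using Suc assms by simp
  qed simp
  have "(f ^^ n) ` Z = (f ^^ (n mod d)) ` (f ^^ (d * (n div d))) ` Z"
    by (simp add: image_comp funpow_add[symmetric])
  then show ?thesis
    using multiple by simp
qed

section \<open>The shift space\<close>

lemma topspace_shift_top [simp]: "topspace shift_top = UNIV"
  by (simp add: shift_top_def)

lemma continuous_map_shift_top_coordinate:
  "continuous_map shift_top (discrete_topology UNIV) (\<lambda>x. x k)"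
  unfolding shift_top_def by (rule continuous_map_product_projection) simp

lemma continuous_map_into_shift_top_iff:
  "continuous_map T shift_top f \<longleftrightarrow> (\<forall>k. continuous_map T (discrete_topology UNIV) (\<lambda>x. f x k))"
  unfolding shift_top_def by (rule continuous_map_componentwise_UNIV)

lemma funpow_shift: "(shift ^^ n) x = (\<lambda>k. x (k + int n))"
  by (induction n arbitrary: x) (auto simp: shift_def algebra_simps)

lemma homeomorphic_map_shift_pow: "homeomorphic_map shift_top shift_top (shift ^^ n)"
proof (rule homeomorphic_maps_imp_map)
  show "homeomorphic_maps shift_top shift_top (shift ^^ n) (\<lambda>x k. x (k - int n))"
    by (auto simp: homeomorphic_maps_def funpow_shift continuous_map_into_shift_top_iff
        continuous_map_shift_top_coordinate)
qed

lemma continuous_map_shift_pow: "continuous_map shift_top shift_top (shift ^^ n)"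
  using homeomorphic_imp_continuous_map[OF homeomorphic_map_shift_pow] .

lemma continuous_map_shift: "continuous_map shift_top shift_top shift"
  using continuous_map_shift_pow[of 1] by simp

lemma inj_shift_pow: "inj (shift ^^ n)"
  using homeomorphic_imp_injective_map[OF homeomorphic_map_shift_pow] by simp

lemma closedin_shift_pow_image:
  "closedin shift_top Z \<Longrightarrow> closedin shift_top ((shift ^^ n) ` Z)"
  using homeomorphic_map_closedness_eq[OF homeomorphic_map_shift_pow] by blast

lemma compact_space_shift_top: "compact_space (shift_top :: (int \<Rightarrow> 'a::finite) topology)"
  by (simp add: shift_top_def compact_space_product_topology compact_space_discrete_topology)

lemma Hausdorff_space_shift_top: "Hausdorff_space shift_top"
  by (simp add: shift_top_def Hausdorff_space_product_topology Hausdorff_space_discrete_topology)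

lemma openin_cylinder: "openin (subtopology shift_top X) (cylinder X u)"
proof -
  have coordinate: "openin shift_top {x. x k = a}" for k a
    using openin_continuous_map_preimage[OF continuous_map_shift_top_coordinate, of "{a}" k] by simp
  have "openin shift_top ((\<Inter>i\<in>{..<length u}. {x. x (int i) = u ! i}) \<inter> topspace shift_top)"
    by (intro openin_INT coordinate) simp
  moreover have "cylinder X u = (\<Inter>i\<in>{..<length u}. {x. x (int i) = u ! i}) \<inter> X"
    by (auto simp: cylinder_def)
  ultimately show ?thesis
    unfolding openin_subtopology by auto
qed

lemma subshift_on_shift_pow_image: "subshift_on A X \<Longrightarrow> (shift ^^ n) ` X = X"
  by (simp add: subshift_on_def funpow_image_eq)

lemma finite_language:
  assumes "finite A" "\<forall>x\<in>X. range x \<subseteq> A"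
  shows "finite (language X n)"
proof (rule finite_subset[OF _ finite_lists_length_eq[OF assms(1), of n]])
  show "language X n \<subseteq> {xs. set xs \<subseteq> A \<and> length xs = n}"
  proof safe
    fix u a assume "u \<in> language X n" "a \<in> set u"
    then obtain x i where "x \<in> X" "i < length u" "x (int i) = u ! i" "u ! i = a"
      by (auto simp: language_def cylinder_def in_set_conv_nth)
    then show "a \<in> A"
      using assms(2) by (metis rangeI subsetD)
  qed (simp add: language_def)
qed

lemma language_nonempty: "X \<noteq> {} \<Longrightarrow> language X n \<noteq> {}"
proof -
  assume "X \<noteq> {}"
  then obtain x where "x \<in> X" by blast
  then have "map (\<lambda>i. x (int i)) [0..<n] \<in> language X n"
    by (auto simp: language_def cylinder_def intro!: exI[of _ x])
  then show ?thesis by blast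
qed

section \<open>Minimal systems\<close>

lemma minimal_system_closedin_iff:
  assumes "closedin T X"
  shows "minimal_system T X f \<longleftrightarrow>
    X \<noteq> {} \<and> f ` X \<subseteq> X \<and> (\<forall>Z. Z \<subseteq> X \<and> Z \<noteq> {} \<and> closedin T Z \<and> f ` Z \<subseteq> Z \<longrightarrow> Z = X)"
  unfolding minimal_system_def closedin_closed_subtopology[OF assms] by blast

lemma minimal_system_factor:
  assumes min: "minimal_system T (topspace T) f"
    and h: "continuous_map T U h" "h ` topspace T = topspace U"
    and comm: "\<And>x. x \<in> topspace T \<Longrightarrow> h (f x) = g (h x)"
  shows "minimal_system U (topspace U) g"
proof -
  have T: "topspace T \<noteq> {}" and f: "f ` topspace T \<subseteq> topspace T"
    and minT: "\<forall>C. closedin T C \<and> C \<noteq> {} \<and> f ` C \<subseteq> C \<longrightarrow> C = topspace T"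
    using min unfolding minimal_system_def subtopology_topspace by blast+
  have "g ` topspace U \<subseteq> topspace U"
    using f unfolding h(2)[symmetric] by (auto simp: comm[symmetric])
  moreover have "Z = topspace U" if Z: "closedin U Z" "Z \<noteq> {}" "g ` Z \<subseteq> Z" for Z
  proof -
    define C where "C = {x \<in> topspace T. h x \<in> Z}"
    have "closedin T C"
      unfolding C_def using Z(1) by (rule closedin_continuous_map_preimage[OF h(1)])
    moreover have "C \<noteq> {}"
      using Z(2) closedin_subset[OF Z(1)] unfolding C_def h(2)[symmetric] by auto
    moreover have "f ` C \<subseteq> C"
      using Z(3) f unfolding C_def by (auto simp: comm)
    ultimately have "C = topspace T"
      using minT by blast
    then have "topspace U \<subseteq> Z"
      unfolding C_def h(2)[symmetric] by auto
    with closedin_subset[OF Z(1)] show ?thesis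
      by (rule subset_antisym)
  qed
  moreover have "topspace U \<noteq> {}"
    using T by (simp flip: h(2))
  ultimately show ?thesis
    unfolding minimal_system_def subtopology_topspace by blast
qed

lemma minimal_system_conjugate_iff:
  assumes h: "homeomorphic_map T U h" and f: "f ` topspace T \<subseteq> topspace T"
    and comm: "\<And>x. x \<in> topspace T \<Longrightarrow> h (f x) = g (h x)"
  shows "minimal_system T (topspace T) f \<longleftrightarrow> minimal_system U (topspace U) g"
proof
  assume "minimal_system T (topspace T) f"
  then show "minimal_system U (topspace U) g"
    using homeomorphic_imp_continuous_map[OF h] homeomorphic_imp_surjective_map[OF h] comm
    by (rule minimal_system_factor)
next
  assume min: "minimal_system U (topspace U) g"
  obtain h' where h': "homeomorphic_maps T U h h'"
    using h homeomorphic_map_maps by blast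
  have "h' (g y) = f (h' y)" if y: "y \<in> topspace U" for y
  proof -
    have x: "h' y \<in> topspace T" "h (h' y) = y"
      using h' y by (auto simp: homeomorphic_maps_def continuous_map_def)
    then have "g y = h (f (h' y))"
      using comm[OF x(1)] by simp
    moreover have "f (h' y) \<in> topspace T"
      using f x(1) by blast
    ultimately show ?thesis
      using h' by (simp add: homeomorphic_maps_def)
  qed
  moreover have "h' ` topspace U = topspace T"
    using homeomorphic_maps_sym[THEN iffD1, OF h']
    by (rule homeomorphic_imp_surjective_map[OF homeomorphic_maps_imp_map])
  ultimately show "minimal_system T (topspace T) f"
    using h' by (intro minimal_system_factor[OF min, where h=h']) (simp_all add: homeomorphic_maps_def)
qed

lemma compact_space_Inter_chain_nonempty:
  assumes T: "compact_space T" and "C \<noteq> {}"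
    and closed: "\<forall>Z\<in>C. closedin T Z" and nonempty: "\<forall>Z\<in>C. Z \<noteq> {}"
    and chain: "\<forall>A\<in>C. \<forall>B\<in>C. A \<subseteq> B \<or> B \<subseteq> A"
  shows "\<Inter>C \<noteq> {}"
proof -
  have "\<forall>F. finite F \<and> F \<subseteq> C \<longrightarrow> \<Inter>F \<noteq> {}"
  proof (intro allI impI)
    fix F assume F: "finite F \<and> F \<subseteq> C"
    show "\<Inter>F \<noteq> {}"
    proof (cases "F = {}")
      case False
      have "subset.chain UNIV F"
        using F chain by (auto simp: subset_chain_def)
      then have "\<Inter>F \<in> F"
        using Inter_in_chain F False by blast
      then show ?thesis
        using F nonempty by blast
    qed simp
  qed
  then show ?thesis
    using T[unfolded compact_space_fip] closed by blast
qed

lemma exists_minimal_subsystem: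
  assumes T: "compact_space T" and X: "closedin T X" "X \<noteq> {}" "f ` X \<subseteq> X"
  obtains Z where "Z \<subseteq> X" "closedin T Z" "minimal_system T Z f"
proof -
  define D where "D = {Z. Z \<subseteq> X \<and> Z \<noteq> {} \<and> closedin T Z \<and> f ` Z \<subseteq> Z}"
  define P where "P = (\<lambda>Z W :: 'a set. W \<subseteq> Z)"
  have po: "partial_order_on D (relation_of P D)"
    by (rule partial_order_on_relation_ofI) (auto simp: P_def)
  have "\<exists>Z\<in>D. \<forall>W\<in>D. P Z W \<longrightarrow> W = Z"
  proof (rule predicate_Zorn[OF po])
    fix C assume C: "C \<in> Chains (relation_of P D)"
    then have CD: "C \<subseteq> D"
      by (rule Chains_relation_of)
    show "\<exists>W\<in>D. \<forall>Z\<in>C. P Z W"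
    proof (cases "C = {}")
      case True
      then show ?thesis
        using X by (auto simp: D_def)
    next
      case False
      have "\<forall>A\<in>C. \<forall>B\<in>C. A \<subseteq> B \<or> B \<subseteq> A"
        using C by (auto simp: Chains_def relation_of_def P_def)
      moreover have "\<forall>Z\<in>C. closedin T Z" "\<forall>Z\<in>C. Z \<noteq> {}"
        using CD by (auto simp: D_def)
      ultimately have "\<Inter>C \<noteq> {}"
        using compact_space_Inter_chain_nonempty[OF T False] by blast
      moreover have "\<Inter>C \<subseteq> X" "closedin T (\<Inter>C)"
        using False CD by (auto simp: D_def intro!: closedin_Inter)
      moreover have "f ` \<Inter>C \<subseteq> \<Inter>C"
        using CD by (fastforce simp: D_def)
      ultimately have "\<Inter>C \<in> D"
        by (simp add: D_def)
      then show ?thesis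
        by (auto simp: P_def)
    qed
  qed
  then obtain Z where Z: "Z \<in> D" "\<forall>W\<in>D. W \<subseteq> Z \<longrightarrow> W = Z"
    by (auto simp: P_def)
  then have "minimal_system T Z f"
    by (subst minimal_system_closedin_iff) (auto simp: D_def)
  with Z(1) show thesis
    by (intro that) (auto simp: D_def)
qed

section \<open>Minimal components of the power of the shift\<close>

lemma Sp_minimal_component_iff:
  "Sp_minimal_component p X Z \<longleftrightarrow>
    Z \<subseteq> X \<and> closedin shift_top Z \<and> minimal_system shift_top Z (shift ^^ p)"
proof (cases "closedin shift_top Z")
  case True
  show ?thesis
    unfolding Sp_minimal_component_def minimal_system_closedin_iff[OF True] by auto
qed (simp add: Sp_minimal_component_def)

lemma minimal_system_shift_pow_image:
  assumes Z: "closedin shift_top Z" "minimal_system shift_top Z (shift ^^ p)"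
  shows "(shift ^^ p) ` Z = Z"
proof -
  have "Z \<noteq> {}" "(shift ^^ p) ` Z \<subseteq> Z"
    and min: "\<And>W. W \<subseteq> Z \<Longrightarrow> W \<noteq> {} \<Longrightarrow> closedin shift_top W \<Longrightarrow> (shift ^^ p) ` W \<subseteq> W \<Longrightarrow> W = Z"
    using Z unfolding minimal_system_closedin_iff[OF Z(1)] by auto
  then show ?thesis
    using closedin_shift_pow_image[OF Z(1)] by (intro min) auto
qed

lemma Sp_minimal_component_shift_pow_image:
  assumes X: "shift ` X = X" and Z: "Sp_minimal_component p X Z"
  shows "Sp_minimal_component p X ((shift ^^ i) ` Z)"
proof -
  have Z': "Z \<subseteq> X" "closedin shift_top Z" "Z \<noteq> {}" "(shift ^^ p) ` Z \<subseteq> Z"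
    and min: "\<And>V. V \<subseteq> Z \<Longrightarrow> V \<noteq> {} \<Longrightarrow> closedin shift_top V \<Longrightarrow> (shift ^^ p) ` V \<subseteq> V \<Longrightarrow> V = Z"
    using Z by (auto simp: Sp_minimal_component_def)
  have commute: "(shift ^^ i) ((shift ^^ p) x) = (shift ^^ p) ((shift ^^ i) x)" for x
    by (simp add: funpow_shift algebra_simps)
  have "(shift ^^ i) ` X = X"
    using X by (rule funpow_image_eq)
  then have "(shift ^^ i) ` Z \<subseteq> X"
    using Z'(1) by blast
  moreover have "(shift ^^ p) ` (shift ^^ i) ` Z = (shift ^^ i) ` (shift ^^ p) ` Z"
    by (simp add: image_image commute)
  then have "(shift ^^ p) ` (shift ^^ i) ` Z \<subseteq> (shift ^^ i) ` Z"
    using image_mono[OF Z'(4)] by simp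
  moreover have "W = (shift ^^ i) ` Z"
    if W: "W \<subseteq> (shift ^^ i) ` Z" "W \<noteq> {}" "closedin shift_top W" "(shift ^^ p) ` W \<subseteq> W" for W
  proof -
    define V where "V = (shift ^^ i) -` W"
    have "V \<subseteq> Z"
    proof
      fix x assume "x \<in> V"
      then obtain z where "z \<in> Z" "(shift ^^ i) x = (shift ^^ i) z"
        using W(1) by (auto simp: V_def)
      then show "x \<in> Z"
        using inj_shift_pow[of i] by (metis injD)
    qed
    moreover have "V \<noteq> {}"
      using W(1,2) by (auto simp: V_def)
    moreover have "closedin shift_top V"
      using closedin_continuous_map_preimage[OF continuous_map_shift_pow W(3)]
      by (simp add: V_def vimage_def)
    moreover have "(shift ^^ p) ` V \<subseteq> V"
      using W(4) by (auto simp: V_def commute)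
    ultimately have "V = Z"
      by (rule min)
    moreover have "(shift ^^ i) ` V = W"
      using W(1) by (auto simp: V_def)
    ultimately show ?thesis
      by simp
  qed
  ultimately show ?thesis
    using Z' closedin_shift_pow_image[OF Z'(2)] by (simp add: Sp_minimal_component_def)
qed

lemma Sp_minimal_components_eq_if_meet:
  assumes A: "Sp_minimal_component p X A" and B: "Sp_minimal_component p X B"
    and "A \<inter> B \<noteq> {}"
  shows "A = B"
proof -
  have meet: "A \<inter> B \<noteq> {}" "closedin shift_top (A \<inter> B)" "(shift ^^ p) ` (A \<inter> B) \<subseteq> A \<inter> B"
    using A B assms(3) by (auto simp: Sp_minimal_component_def)
  have "A \<inter> B = A"
    using A meet unfolding Sp_minimal_component_def by blast
  moreover have "A \<inter> B = B"
    using B meet unfolding Sp_minimal_component_def by blast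
  ultimately show ?thesis
    by simp
qed

lemma num_Sp_components_eq_1_iff:
  assumes X: "subshift_on A X" and min: "minimal_system shift_top X shift"
  shows "num_Sp_components p X = 1 \<longleftrightarrow> minimal_system shift_top X (shift ^^ p)"
proof
  have closed: "closedin shift_top X" and SX: "shift ` X = X"
    using X by (simp_all add: subshift_on_def)
  assume "num_Sp_components p X = 1"
  then obtain Z where components: "{Z. Sp_minimal_component p X Z} = {Z}"
    unfolding num_Sp_components_def by (meson card_1_singletonE)
  then have Z: "Sp_minimal_component p X Z"
    by blast
  have "Sp_minimal_component p X ((shift ^^ 1) ` Z)"
    using SX Z by (rule Sp_minimal_component_shift_pow_image)
  then have "(shift ^^ 1) ` Z \<in> {Z}"
    unfolding components[symmetric] by simp
  moreover have minX: "\<And>W. W \<subseteq> X \<Longrightarrow> W \<noteq> {} \<Longrightarrow> closedin shift_top W \<Longrightarrow> shift ` W \<subseteq> W \<Longrightarrow> W = X"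
    using min unfolding minimal_system_closedin_iff[OF closed] by blast
  ultimately have "Z = X"
    using Z unfolding Sp_minimal_component_def by (intro minX) auto
  then show "minimal_system shift_top X (shift ^^ p)"
    using Z by (simp add: Sp_minimal_component_iff)
next
  have closed: "closedin shift_top X"
    using X by (simp add: subshift_on_def)
  assume Sp_min: "minimal_system shift_top X (shift ^^ p)"
  have "Sp_minimal_component p X Z \<longleftrightarrow> Z = X" for Z
  proof
    assume "Sp_minimal_component p X Z"
    then show "Z = X"
      using Sp_min unfolding Sp_minimal_component_def minimal_system_closedin_iff[OF closed]
      by blast
  next
    assume "Z = X"
    then show "Sp_minimal_component p X Z"
      using Sp_min closed by (simp add: Sp_minimal_component_iff)
  qed
  then have "{Z. Sp_minimal_component p X Z} = {X}"
    by blast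
  then show "num_Sp_components p X = 1"
    by (simp add: num_Sp_components_def)
qed

lemma minimal_subshift_Union_translates:
  assumes X: "subshift_on A X" "minimal_system shift_top X shift"
    and Z: "Z \<subseteq> X" "Z \<noteq> {}" "closedin shift_top Z" and d: "0 < d" "(shift ^^ d) ` Z = Z"
  shows "X = (\<Union>i<d. (shift ^^ i) ` Z)"
proof -
  have closed: "closedin shift_top X"
    using X(1) by (simp add: subshift_on_def)
  define U where "U = (\<Union>i<d. (shift ^^ i) ` Z)"
  have "(shift ^^ i) ` Z \<subseteq> (shift ^^ i) ` X" for i
    using Z(1) by (rule image_mono)
  then have "(shift ^^ i) ` Z \<subseteq> X" for i
    by (simp add: subshift_on_shift_pow_image[OF X(1)])
  then have "U \<subseteq> X" "U \<noteq> {}" "closedin shift_top U"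
    using Z(2,3) d(1) unfolding U_def by (auto intro!: closedin_Union closedin_shift_pow_image)
  moreover have "shift ` U \<subseteq> U"
  proof
    fix y assume "y \<in> shift ` U"
    then obtain i where "i < d" "y \<in> shift ` (shift ^^ i) ` Z"
      by (auto simp: U_def)
    then have "y \<in> (shift ^^ (Suc i mod d)) ` Z" "Suc i mod d < d"
      using funpow_image_mod[OF d(2), of "Suc i"] d(1) by (simp_all add: image_comp)
    then show "y \<in> U"
      by (auto simp: U_def)
  qed
  ultimately have "U = X"
    using X(2) unfolding minimal_system_closedin_iff[OF closed] by blast
  then show ?thesis
    by (simp add: U_def)
qed

lemma Sp_minimal_component_translates_disjoint:
  assumes SX: "shift ` X = X" and Z: "Sp_minimal_component p X Z"
    and below: "\<And>e. 0 < e \<Longrightarrow> e < d \<Longrightarrow> (shift ^^ e) ` Z \<noteq> Z"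
    and "i < d" "j < d" "(shift ^^ i) ` Z \<inter> (shift ^^ j) ` Z \<noteq> {}"
  shows "i = j"
proof -
  have unequal: False if "a < b" "b < d" "(shift ^^ a) ` Z \<inter> (shift ^^ b) ` Z \<noteq> {}" for a b
  proof -
    have "(shift ^^ a) ` Z = (shift ^^ b) ` Z"
      using Sp_minimal_component_shift_pow_image[OF SX Z] Sp_minimal_component_shift_pow_image[OF SX Z]
        that(3) by (rule Sp_minimal_components_eq_if_meet)
    also have "\<dots> = (shift ^^ (a + (b - a))) ` Z"
      using \<open>a < b\<close> by simp
    also have "\<dots> = (shift ^^ a) ` (shift ^^ (b - a)) ` Z"
      by (simp only: funpow_add image_comp)
    finally have "Z = (shift ^^ (b - a)) ` Z"
      unfolding inj_image_eq_iff[OF inj_shift_pow] .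
    moreover have "0 < b - a" "b - a < d"
      using that(1,2) by simp_all
    ultimately show False
      using below[of "b - a"] by argo
  qed
  show ?thesis
    using unequal[of i j] unequal[of j i] assms(4-6) by (metis Int_commute linorder_neqE_nat)
qed

lemma Sp_minimal_component_cyclic:
  assumes X: "subshift_on A X" "minimal_system shift_top X shift"
    and Z: "Sp_minimal_component p X Z" and p: "0 < p"
  obtains d where "0 < d" "d dvd p"
    "\<And>n. (shift ^^ n) ` Z = (shift ^^ (n mod d)) ` Z"
    "\<And>i j. i < d \<Longrightarrow> j < d \<Longrightarrow> (shift ^^ i) ` Z \<inter> (shift ^^ j) ` Z \<noteq> {} \<Longrightarrow> i = j"
    "X = (\<Union>i<d. (shift ^^ i) ` Z)"
proof -
  have "(shift ^^ p) ` Z = Z"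
    using Z by (simp add: Sp_minimal_component_iff minimal_system_shift_pow_image)
  define d where "d = (LEAST d. 0 < d \<and> (shift ^^ d) ` Z = Z)"
  have d: "0 < d" "(shift ^^ d) ` Z = Z"
    using LeastI[of "\<lambda>d. 0 < d \<and> (shift ^^ d) ` Z = Z" p] p \<open>(shift ^^ p) ` Z = Z\<close>
    unfolding d_def by auto
  have below_d: "(shift ^^ e) ` Z \<noteq> Z" if "0 < e" "e < d" for e
    using not_less_Least[of e "\<lambda>d. 0 < d \<and> (shift ^^ d) ` Z = Z"] that unfolding d_def by auto
  have mod_d: "(shift ^^ n) ` Z = (shift ^^ (n mod d)) ` Z" for n
    using d(2) by (rule funpow_image_mod)
  have "d dvd p"
    using below_d[of "p mod d"] mod_d[of p] \<open>(shift ^^ p) ` Z = Z\<close> d(1) by (auto simp: dvd_eq_mod_eq_0)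
  moreover have "X = (\<Union>i<d. (shift ^^ i) ` Z)"
    using Z d by (intro minimal_subshift_Union_translates[OF X]) (auto simp: Sp_minimal_component_def)
  moreover have "shift ` X = X"
    using X(1) by (simp add: subshift_on_def)
  ultimately show thesis
    using Sp_minimal_component_translates_disjoint[OF _ Z below_d] by (intro that[OF d(1) _ mod_d]) simp_all
qed

section \<open>Eigenvalues that are roots of unity\<close>

lemma cis_2pi_int_div_power:
  assumes "0 < n"
  shows "cis (2 * pi * real_of_int k / real n) ^ n = 1"
proof -
  \<comment> \<open>The unqualified name \<open>DeMoivre\<close> refers to a version for \<open>cos\<close> and \<open>sin\<close> on \<open>complex\<close>.\<close>
  have "cis (2 * pi * real_of_int k / real n) ^ n = cis (real n * (2 * pi * real_of_int k / real n))"
    by (rule Complex.DeMoivre)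
  also have "real n * (2 * pi * real_of_int k / real n) = 2 * pi * real_of_int k"
    using assms by simp
  finally show ?thesis
    by simp
qed

lemma cis_2pi_div_eq_1_iff: "0 < d \<Longrightarrow> cis (2 * pi / real d) = 1 \<longleftrightarrow> d = 1"
proof
  assume "0 < d" "cis (2 * pi / real d) = 1"
  then have "cos (2 * pi / real d) = 1"
    by (metis cis.sel(1) one_complex.sel(1))
  then obtain n :: int where "2 * pi / real d = real_of_int n * 2 * pi"
    using cos_one_2pi_int by blast
  then have "real_of_int (n * int d) = 1"
    using \<open>0 < d\<close> by (simp add: field_simps)
  then have "int d dvd 1"
    by (metis dvd_triv_right of_int_eq_1_iff)
  then show "d = 1"
    by simp
qed simp

lemma eigenfunction_shift_pow:
  fixes f :: "(int \<Rightarrow> 'a) \<Rightarrow> 'b::monoid_mult"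
  assumes "shift ` X \<subseteq> X" "\<forall>x\<in>X. f (shift x) = z * f x" "x \<in> X"
  shows "f ((shift ^^ n) x) = z ^ n * f x"
proof (induction n)
  case (Suc n)
  have "(shift ^^ n) x \<in> X"
    using assms(1,3) by (induction n) auto
  then show ?case
    using Suc assms(2) by (simp add: mult.assoc)
qed simp

lemma topological_eigenvalue_root_of_unity:
  assumes X: "subshift_on A X" and Sp_min: "minimal_system shift_top X (shift ^^ p)"
    and z: "topological_eigenvalue X z" "z ^ p = 1"
  shows "z = 1"
proof -
  obtain f x0 where f: "continuous_map (subtopology shift_top X) euclidean f"
    "\<forall>x\<in>X. f (shift x) = z * f x" and x0: "x0 \<in> X" "f x0 \<noteq> 0"
    using z(1) unfolding topological_eigenvalue_def by blast
  have SX: "shift ` X = X" and closed: "closedin shift_top X"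
    using X by (simp_all add: subshift_on_def)
  define W where "W = {x \<in> topspace (subtopology shift_top X). f x \<in> {f x0}}"
  have "closedin (subtopology shift_top X) W"
    unfolding W_def by (rule closedin_continuous_map_preimage[OF f(1)]) simp
  then have "closedin shift_top W"
    using closed closedin_trans_full by blast
  moreover have "W \<subseteq> X" "W \<noteq> {}"
    using x0 by (auto simp: W_def)
  moreover have "(shift ^^ p) ` W \<subseteq> W"
  proof (rule image_subsetI)
    fix x assume "x \<in> W"
    then have x: "x \<in> X" "f x = f x0"
      by (simp_all add: W_def)
    have "(shift ^^ p) x \<in> X"
      using subshift_on_shift_pow_image[OF X] x(1) by blast
    moreover have "f ((shift ^^ p) x) = f x"
      using eigenfunction_shift_pow[of X f z x p] SX f(2) x(1) z(2) by simp
    ultimately show "(shift ^^ p) x \<in> W"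
      using x by (simp add: W_def)
  qed
  ultimately have "W = X"
    using Sp_min unfolding minimal_system_closedin_iff[OF closed] by blast
  then have "f (shift x0) = f x0"
    using x0(1) SX by (auto simp: W_def)
  then show "z = 1"
    using f(2) x0 by simp
qed

lemma continuous_map_constant_on_closed_partition:
  fixes Z :: "nat \<Rightarrow> 'a set"
  assumes closed: "\<And>i. i < d \<Longrightarrow> closedin T (Z i)"
    and disjoint: "\<And>i j. i < d \<Longrightarrow> j < d \<Longrightarrow> Z i \<inter> Z j \<noteq> {} \<Longrightarrow> i = j"
    and cover: "X = (\<Union>i<d. Z i)"
    and const: "\<And>i x. i < d \<Longrightarrow> x \<in> Z i \<Longrightarrow> f x = a i"
  shows "continuous_map (subtopology T X) euclidean f"
proof -
  have sub: "Z j \<subseteq> topspace T" if "j < d" for j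
    using closedin_subset[OF closed[OF that]] .
  have "openin (subtopology T X) (Z i)" if "i < d" for i
  proof -
    have "Z i = topspace (subtopology T X) - (\<Union>j\<in>{..<d} - {i}. Z j)"
      using cover disjoint[of i] sub that by auto
    moreover have "closedin (subtopology T X) (\<Union>j\<in>{..<d} - {i}. Z j)"
      using closed cover by (intro closedin_Union closedin_subset_topspace) auto
    ultimately show ?thesis
      using openin_diff[OF openin_topspace] by metis
  qed
  moreover have "{x \<in> topspace (subtopology T X). f x \<in> V} = (\<Union>i\<in>{i. i < d \<and> a i \<in> V}. Z i)" for V
    using cover const sub by auto
  ultimately show ?thesis
    by (auto simp: continuous_map_def intro!: openin_Union)
qed

lemma topological_eigenvalue_cyclic_partition:
  assumes d: "0 < d" and "Z 0 \<noteq> {}"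
    and closed: "\<And>i. i < d \<Longrightarrow> closedin shift_top (Z i)"
    and disjoint: "\<And>i j. i < d \<Longrightarrow> j < d \<Longrightarrow> Z i \<inter> Z j \<noteq> {} \<Longrightarrow> i = j"
    and cover: "X = (\<Union>i<d. Z i)"
    and cyclic: "\<And>i. i < d \<Longrightarrow> shift ` Z i \<subseteq> Z (Suc i mod d)"
  shows "topological_eigenvalue X (cis (2 * pi / d))"
proof -
  define z where "z = cis (2 * pi / d)"
  define index where "index x = (THE i. i < d \<and> x \<in> Z i)" for x
  have index: "index x = i" if "i < d" "x \<in> Z i" for x i
    unfolding index_def using that disjoint by (intro the_equality) auto
  define f where "f x = z ^ index x" for x
  have f: "f x = z ^ i" if "i < d" "x \<in> Z i" for x i
    using index[OF that] by (simp add: f_def)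
  have "continuous_map (subtopology shift_top X) euclidean f"
    using closed disjoint cover f by (rule continuous_map_constant_on_closed_partition)
  moreover have "f (shift x) = z * f x" if x: "x \<in> X" for x
  proof -
    obtain i where i: "i < d" "x \<in> Z i"
      using cover x by blast
    have "z ^ d = 1"
      using cis_2pi_int_div_power[OF d, of 1] by (simp add: z_def)
    then have "z ^ (Suc i mod d) = z ^ Suc i"
      by (metis mod_mult_div_eq power_add power_mult power_one mult_1_right)
    then show ?thesis
      using i cyclic[OF i(1)] f[OF i] f[of "Suc i mod d" "shift x"] d by auto
  qed
  moreover obtain x0 where "x0 \<in> Z 0"
    using \<open>Z 0 \<noteq> {}\<close> by blast
  then have "x0 \<in> X" "f x0 \<noteq> 0"
    using cover f[of 0 x0] d by auto
  ultimately show ?thesis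
    unfolding topological_eigenvalue_def z_def by blast
qed

lemma topological_eigenvalue_if_not_Sp_minimal:
  fixes X :: "(int \<Rightarrow> 'a::finite) set"
  assumes X: "subshift_on A X" "minimal_system shift_top X shift" and p: "0 < p"
    and not_Sp_min: "\<not> minimal_system shift_top X (shift ^^ p)"
  obtains d where "1 < d" "d dvd p" "topological_eigenvalue X (cis (2 * pi / d))"
proof -
  have "closedin shift_top X" "X \<noteq> {}" "(shift ^^ p) ` X \<subseteq> X"
    using X(1) subshift_on_shift_pow_image[OF X(1)] by (simp_all add: subshift_on_def)
  then obtain Z where "Z \<subseteq> X" "closedin shift_top Z" "minimal_system shift_top Z (shift ^^ p)"
    using exists_minimal_subsystem[OF compact_space_shift_top] by metis
  then have Z: "Sp_minimal_component p X Z"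
    by (simp add: Sp_minimal_component_iff)
  obtain d where d: "0 < d" "d dvd p"
    and mod_d: "\<And>n. (shift ^^ n) ` Z = (shift ^^ (n mod d)) ` Z"
    and disjoint: "\<And>i j. i < d \<Longrightarrow> j < d \<Longrightarrow> (shift ^^ i) ` Z \<inter> (shift ^^ j) ` Z \<noteq> {} \<Longrightarrow> i = j"
    and cover: "X = (\<Union>i<d. (shift ^^ i) ` Z)"
    using Sp_minimal_component_cyclic[OF X Z p] by blast
  have "d \<noteq> 1"
  proof
    assume "d = 1"
    then have "Z = X"
      using cover by (simp add: lessThan_Suc)
    then show False
      using Z not_Sp_min by (simp add: Sp_minimal_component_iff)
  qed
  moreover have "topological_eigenvalue X (cis (2 * pi / d))"
  proof (rule topological_eigenvalue_cyclic_partition[where Z = "\<lambda>i. (shift ^^ i) ` Z"])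
    show "(shift ^^ 0) ` Z \<noteq> {}"
      using Z by (simp add: Sp_minimal_component_def)
    show "closedin shift_top ((shift ^^ i) ` Z)" for i
      using Z by (simp add: Sp_minimal_component_def closedin_shift_pow_image)
    show "shift ` (shift ^^ i) ` Z \<subseteq> (shift ^^ (Suc i mod d)) ` Z" for i
      using mod_d[of "Suc i"] by (simp add: image_comp)
  qed (use d disjoint cover in auto)
  moreover have "1 < d"
    using d(1) \<open>d \<noteq> 1\<close> by linarith
  ultimately show thesis
    using d(2) that by blast
qed

lemma num_Sp_components_eq_1_iff_no_eigenvalue:
  fixes X :: "(int \<Rightarrow> 'a::finite) set"
  assumes X: "subshift_on A X" "minimal_system shift_top X shift" and p: "0 < p"
  shows "num_Sp_components p X = 1 \<longleftrightarrow>
    (\<forall>k::int. topological_eigenvalue X (cis (2 * pi * real_of_int k / real p))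
      \<longrightarrow> cis (2 * pi * real_of_int k / real p) = 1)"
  unfolding num_Sp_components_eq_1_iff[OF X]
proof
  assume Sp_min: "minimal_system shift_top X (shift ^^ p)"
  then show "\<forall>k::int. topological_eigenvalue X (cis (2 * pi * real_of_int k / real p))
      \<longrightarrow> cis (2 * pi * real_of_int k / real p) = 1"
    using topological_eigenvalue_root_of_unity[OF X(1) Sp_min] cis_2pi_int_div_power[OF p] by blast
next
  assume no_eigenvalue: "\<forall>k::int. topological_eigenvalue X (cis (2 * pi * real_of_int k / real p))
      \<longrightarrow> cis (2 * pi * real_of_int k / real p) = 1"
  show "minimal_system shift_top X (shift ^^ p)"
  proof (rule ccontr)
    assume "\<not> minimal_system shift_top X (shift ^^ p)"
    then obtain d where d: "1 < d" "d dvd p" "topological_eigenvalue X (cis (2 * pi / d))"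
      by (rule topological_eigenvalue_if_not_Sp_minimal[OF X p])
    then obtain q where q: "p = d * q"
      by blast
    then have "cis (2 * pi / d) = cis (2 * pi * real_of_int (int q) / real p)"
      using p by simp
    then have "cis (2 * pi / d) = 1"
      using no_eigenvalue d(3) by metis
    then show False
      using d(1) cis_2pi_div_eq_1_iff[of d] by simp
  qed
qed

section \<open>Periodic orbits and the product system\<close>

lemma periodic_int_multiple:
  assumes "\<forall>n. w (n + int p) = w n"
  shows "w (n + int p * q) = w n"
proof (induction q rule: int_induct[where k = 0])
  case (step1 i)
  then show ?case
    using assms[rule_format, of "n + int p * i"] by (simp add: algebra_simps)
next
  case (step2 i)
  then show ?case
    using assms[rule_format, of "n + int p * (i - 1)"] by (simp add: algebra_simps)
qed simp

lemma least_period_shift_pow: "least_period p w \<Longrightarrow> (shift ^^ p) w = w"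
  by (simp add: least_period_def funpow_shift)

lemma orbit_set_least_period:
  assumes w: "least_period p w"
  shows "orbit_set w = (\<lambda>j. (shift ^^ j) w) ` {..<p}"
proof
  show "(\<lambda>j. (shift ^^ j) w) ` {..<p} \<subseteq> orbit_set w"
    by (auto simp: orbit_set_def funpow_shift)
  show "orbit_set w \<subseteq> (\<lambda>j. (shift ^^ j) w) ` {..<p}"
  proof
    fix v assume "v \<in> orbit_set w"
    then obtain k where k: "v = (\<lambda>n. w (n + k))"
      by (auto simp: orbit_set_def)
    have p: "0 < p" and periodic: "\<forall>n. w (n + int p) = w n"
      using w by (simp_all add: least_period_def)
    define j where "j = nat (k mod int p)"
    have "w (n + k) = w (n + int j)" for n
      using periodic_int_multiple[OF periodic, of "n + int j" "k div int p"] p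
      by (simp add: j_def algebra_simps)
    then have "v = (shift ^^ j) w"
      by (simp add: k funpow_shift)
    moreover have "j < p"
      using p by (simp add: j_def nat_less_iff)
    ultimately show "v \<in> (\<lambda>j. (shift ^^ j) w) ` {..<p}"
      by blast
  qed
qed

lemma shift_pow_in_orbit_set: "(shift ^^ j) w \<in> orbit_set w"
  by (auto simp: orbit_set_def funpow_shift)

lemma finite_orbit_set: "least_period p w \<Longrightarrow> finite (orbit_set w)"
  by (simp add: orbit_set_least_period)

lemma shift_image_orbit_set: "shift ` orbit_set w = orbit_set w"
proof
  show "shift ` orbit_set w \<subseteq> orbit_set w"
  proof (rule image_subsetI)
    fix v assume "v \<in> orbit_set w"
    then obtain k where "v = (\<lambda>n. w (n + k))"
      by (auto simp: orbit_set_def)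
    then have "shift v = (\<lambda>n. w (n + (k + 1)))"
      by (simp add: shift_def algebra_simps)
    then show "shift v \<in> orbit_set w"
      by (auto simp: orbit_set_def)
  qed
  show "orbit_set w \<subseteq> shift ` orbit_set w"
  proof
    fix v assume "v \<in> orbit_set w"
    then obtain k where "v = (\<lambda>n. w (n + k))"
      by (auto simp: orbit_set_def)
    then have "v = shift (\<lambda>n. w (n + (k - 1)))"
      by (simp add: shift_def algebra_simps)
    moreover have "(\<lambda>n. w (n + (k - 1))) \<in> orbit_set w"
      by (auto simp: orbit_set_def)
    ultimately show "v \<in> shift ` orbit_set w"
      by (rule image_eqI)
  qed
qed

lemma range_orbit_set: "v \<in> orbit_set w \<Longrightarrow> range v \<subseteq> range w"
  by (auto simp: orbit_set_def)

lemma finite_range_least_period: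
  assumes "least_period p w"
  shows "finite (range w)"
proof (rule finite_subset)
  show "range w \<subseteq> (\<lambda>v. v 0) ` orbit_set w"
  proof
    fix a assume "a \<in> range w"
    then obtain k where "a = w k"
      by blast
    moreover have "(\<lambda>n. w (n + k)) \<in> orbit_set w"
      by (auto simp: orbit_set_def)
    ultimately show "a \<in> (\<lambda>v. v 0) ` orbit_set w"
      by (auto intro: image_eqI[of _ _ "\<lambda>n. w (n + k)"])
  qed
  show "finite ((\<lambda>v. v 0) ` orbit_set w)"
    using finite_orbit_set[OF assms] by simp
qed

lemma least_period_shift_pow_inj:
  assumes w: "least_period p w" and "i < p" "j < p" "(shift ^^ i) w = (shift ^^ j) w"
  shows "i = j"
proof -
  have no_period: "\<not> (\<forall>n. w (n + int q) = w n)" if "0 < q" "q < p" for q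
    using w that unfolding least_period_def by blast
  have coincide: False if "a < b" "b < p" "(shift ^^ a) w = (shift ^^ b) w" for a b
  proof -
    have shifted: "w (n + int b) = w (n + int a)" for n
      using fun_cong[OF that(3), of n] by (simp add: funpow_shift)
    have "w (m + int (b - a)) = w m" for m
    proof -
      have "m + int (b - a) = (m - int a) + int b"
        using that(1) by simp
      then have "w (m + int (b - a)) = w ((m - int a) + int b)"
        by (rule arg_cong)
      also have "\<dots> = w ((m - int a) + int a)"
        by (rule shifted)
      finally show ?thesis
        by simp
    qed
    moreover have "0 < b - a" "b - a < p"
      using that(1,2) by simp_all
    ultimately show False
      using no_period by blast
  qed
  show ?thesis
  proof (cases i j rule: linorder_cases)
    case less
    then show ?thesis
      using coincide[of i j] assms(3,4) by simp
  next
    case greater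
    then show ?thesis
      using coincide[of j i] assms(2,4) by simp
  qed
qed

abbreviation shift_prod_top :: "(int \<Rightarrow> 'a) set \<Rightarrow> (int \<Rightarrow> 'b) set \<Rightarrow> ((int \<Rightarrow> 'a) \<times> (int \<Rightarrow> 'b)) topology"
  where "shift_prod_top X Y \<equiv> prod_topology (subtopology shift_top X) (subtopology shift_top Y)"

lemma subtopology_shift_prod_top: "subtopology (shift_prod_top X Y) (X \<times> Y) = shift_prod_top X Y"
  using subtopology_topspace[of "shift_prod_top X Y"] by simp

lemma funpow_prod_map: "(prod_map ^^ n) z = ((shift ^^ n) (fst z), (shift ^^ n) (snd z))"
  by (induction n) (simp_all add: prod_map_def)

lemma prod_map_image: "shift ` X = X \<Longrightarrow> shift ` Y = Y \<Longrightarrow> prod_map ` (X \<times> Y) = X \<times> Y"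
  by (simp add: prod_map_def image_iff set_eq_iff)

lemma closedin_shift_prod_top_Union_Times:
  fixes n :: nat
  assumes "\<And>j. j < n \<Longrightarrow> closedin shift_top (B j) \<and> B j \<subseteq> X" and "\<And>j. j < n \<Longrightarrow> y j \<in> Y"
  shows "closedin (shift_prod_top X Y) (\<Union>j<n. B j \<times> {y j})"
proof (rule closedin_Union)
  show "finite ((\<lambda>j. B j \<times> {y j}) ` {..<n})"
    by simp
  fix T assume "T \<in> (\<lambda>j. B j \<times> {y j}) ` {..<n}"
  then obtain j where j: "j < n" "T = B j \<times> {y j}"
    by blast
  have "closedin (subtopology shift_top X) (B j)"
    using assms(1)[OF j(1)] by (simp add: closedin_subset_topspace)
  moreover have "closedin (subtopology shift_top Y) {y j}"
    using assms(2)[OF j(1)] closedin_Hausdorff_singleton[OF Hausdorff_space_shift_top, of "y j"]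
    by (simp add: closedin_subset_topspace)
  ultimately show "closedin (shift_prod_top X Y) T"
    by (simp add: j(2) closedin_prod_Times_iff)
qed

lemma prod_map_image_Union_translates:
  assumes Z: "(shift ^^ p) ` Z \<subseteq> Z" and periodic: "(shift ^^ p) w = w" and p: "0 < p"
  defines "C \<equiv> \<Union>j<p. (shift ^^ j) ` Z \<times> {(shift ^^ j) w}"
  shows "prod_map ` C \<subseteq> C"
proof (rule image_subsetI)
  fix z assume "z \<in> C"
  then obtain j x where j: "j < p" "x \<in> (shift ^^ j) ` Z" "z = (x, (shift ^^ j) w)"
    by (auto simp: C_def)
  then have z': "prod_map z = (shift x, (shift ^^ Suc j) w)" "shift x \<in> (shift ^^ Suc j) ` Z"
    by (auto simp: prod_map_def)
  show "prod_map z \<in> C"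
  proof (cases "Suc j = p")
    case True
    then have "shift x \<in> (shift ^^ p) ` Z"
      using z'(2) by simp
    then have "shift x \<in> (shift ^^ 0) ` Z"
      using Z by auto
    moreover have "prod_map z = (shift x, (shift ^^ 0) w)"
      using z'(1) True periodic by simp
    ultimately show ?thesis
      unfolding C_def using p by (intro UN_I[of 0]) auto
  next
    case False
    then show ?thesis
      unfolding C_def using z' j(1) by (intro UN_I[of "Suc j"]) auto
  qed
qed

lemma Sp_minimal_if_prod_minimal:
  assumes X: "subshift_on A X" and w: "least_period p w"
    and min: "minimal_system (shift_prod_top X (orbit_set w)) (X \<times> orbit_set w) prod_map"
  shows "minimal_system shift_top X (shift ^^ p)"
proof -
  have closed: "closedin shift_top X"
    using X by (simp add: subshift_on_def)
  have p: "0 < p" and periodic: "(shift ^^ p) w = w"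
    using w by (simp_all add: least_period_def least_period_shift_pow)
  have min_prod: "C = X \<times> orbit_set w"
    if "closedin (shift_prod_top X (orbit_set w)) C" "C \<noteq> {}" "prod_map ` C \<subseteq> C" for C
    using min that unfolding minimal_system_def subtopology_shift_prod_top by blast
  have "Z = X" if Z: "Z \<subseteq> X" "Z \<noteq> {}" "closedin shift_top Z" "(shift ^^ p) ` Z \<subseteq> Z" for Z
  proof -
    define C where "C = (\<Union>j<p. (shift ^^ j) ` Z \<times> {(shift ^^ j) w})"
    have "closedin (shift_prod_top X (orbit_set w)) C"
      unfolding C_def using Z(1,3) subshift_on_shift_pow_image[OF X]
      by (intro closedin_shift_prod_top_Union_Times)
        (auto simp: closedin_shift_pow_image shift_pow_in_orbit_set)
    moreover have "C \<noteq> {}"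
      using Z(2) p by (auto simp: C_def)
    moreover have "prod_map ` C \<subseteq> C"
      unfolding C_def using Z(4) periodic p by (rule prod_map_image_Union_translates)
    ultimately have C: "C = X \<times> orbit_set w"
      by (rule min_prod)
    show "Z = X"
    proof
      show "X \<subseteq> Z"
      proof
        fix x assume "x \<in> X"
        then have "(x, (shift ^^ 0) w) \<in> C"
          using C shift_pow_in_orbit_set[of 0 w] by simp
        then obtain j where "j < p" "x \<in> (shift ^^ j) ` Z" "(shift ^^ 0) w = (shift ^^ j) w"
          by (auto simp: C_def)
        then show "x \<in> Z"
          using least_period_shift_pow_inj[OF w p] by fastforce
      qed
    qed (rule Z(1))
  qed
  moreover have "X \<noteq> {}" "(shift ^^ p) ` X \<subseteq> X"
    using X subshift_on_shift_pow_image[OF X] by (simp_all add: subshift_on_def)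
  ultimately show ?thesis
    unfolding minimal_system_closedin_iff[OF closed] by blast
qed

lemma prod_map_invariant_meets_fibre:
  assumes w: "least_period p w"
    and C: "C \<subseteq> X \<times> orbit_set w" "C \<noteq> {}" "prod_map ` C \<subseteq> C"
  obtains x where "(x, w) \<in> C"
proof -
  obtain x j where xj: "(x, (shift ^^ j) w) \<in> C" "j < p"
    using C(1,2) orbit_set_least_period[OF w] by fastforce
  then have "(prod_map ^^ (p - j)) (x, (shift ^^ j) w) \<in> C"
    using funpow_image_subset[OF C(3)] by blast
  moreover have "(shift ^^ (p - j)) ((shift ^^ j) w) = (shift ^^ (p - j + j)) w"
    by (simp only: funpow_add comp_apply)
  then have "(shift ^^ (p - j)) ((shift ^^ j) w) = w"
    using xj(2) least_period_shift_pow[OF w] by simp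
  ultimately have "((shift ^^ (p - j)) x, w) \<in> C"
    by (simp add: funpow_prod_map)
  then show thesis
    by (rule that)
qed

lemma prod_map_invariant_superset_if_fibre:
  assumes X: "subshift_on A X" and w: "least_period p w"
    and C: "prod_map ` C \<subseteq> C" and fibre: "\<And>x. x \<in> X \<Longrightarrow> (x, w) \<in> C"
  shows "X \<times> orbit_set w \<subseteq> C"
proof clarify
  fix x v assume "x \<in> X" "v \<in> orbit_set w"
  then obtain j where "v = (shift ^^ j) w"
    using orbit_set_least_period[OF w] by blast
  have "x \<in> (shift ^^ j) ` X"
    using \<open>x \<in> X\<close> subshift_on_shift_pow_image[OF X, of j] by simp
  then obtain x' where "x' \<in> X" "x = (shift ^^ j) x'"
    by blast
  moreover have "(prod_map ^^ j) (x', w) \<in> C"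
    using funpow_image_subset[OF C] fibre[OF \<open>x' \<in> X\<close>] by blast
  ultimately show "(x, v) \<in> C"
    using \<open>v = (shift ^^ j) w\<close> by (simp add: funpow_prod_map)
qed

lemma prod_minimal_if_Sp_minimal:
  assumes X: "subshift_on A X" and w: "least_period p w"
    and Sp_min: "minimal_system shift_top X (shift ^^ p)"
  shows "minimal_system (shift_prod_top X (orbit_set w)) (X \<times> orbit_set w) prod_map"
  unfolding minimal_system_def subtopology_shift_prod_top
proof (intro conjI allI impI; (elim conjE)?)
  have closed: "closedin shift_top X" and SX: "shift ` X = X" and "X \<noteq> {}"
    using X by (simp_all add: subshift_on_def)
  show "X \<times> orbit_set w \<noteq> {}"
    using \<open>X \<noteq> {}\<close> shift_pow_in_orbit_set by blast
  show "prod_map ` (X \<times> orbit_set w) \<subseteq> X \<times> orbit_set w"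
    using prod_map_image[OF SX shift_image_orbit_set[of w]] by simp
  fix C assume C: "closedin (shift_prod_top X (orbit_set w)) C" "C \<noteq> {}" "prod_map ` C \<subseteq> C"
  have C_sub: "C \<subseteq> X \<times> orbit_set w"
    using closedin_subset[OF C(1)] by simp
  define C0 where "C0 = {x \<in> topspace (subtopology shift_top X). (x, w) \<in> C}"
  have "continuous_map (subtopology shift_top X) (shift_prod_top X (orbit_set w)) (\<lambda>x. (x, w))"
    using shift_pow_in_orbit_set[of 0 w]
    by (intro continuous_map_pairedI) (simp_all add: continuous_map_id[unfolded id_def])
  then have "closedin (subtopology shift_top X) C0"
    unfolding C0_def using C(1) by (rule closedin_continuous_map_preimage)
  then have "closedin shift_top C0"
    using closed closedin_trans_full by blast
  moreover have "C0 \<noteq> {}"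
    using prod_map_invariant_meets_fibre[OF w C_sub C(2,3)] C_sub by (auto simp: C0_def)
  moreover have "(shift ^^ p) ` C0 \<subseteq> C0"
  proof (rule image_subsetI)
    fix x assume "x \<in> C0"
    then have "(prod_map ^^ p) (x, w) \<in> C"
      using funpow_image_subset[OF C(3)] by (auto simp: C0_def)
    then show "(shift ^^ p) x \<in> C0"
      using C_sub least_period_shift_pow[OF w] by (auto simp: C0_def funpow_prod_map)
  qed
  moreover have "C0 \<subseteq> X"
    by (auto simp: C0_def)
  moreover have "\<And>W. W \<subseteq> X \<and> W \<noteq> {} \<and> closedin shift_top W \<and> (shift ^^ p) ` W \<subseteq> W \<Longrightarrow> W = X"
    using Sp_min unfolding minimal_system_closedin_iff[OF closed] by blast
  ultimately have "C0 = X"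
    by blast
  then have "X \<times> orbit_set w \<subseteq> C"
    using X w C(3) by (intro prod_map_invariant_superset_if_fibre) (auto simp: C0_def)
  with C_sub show "C = X \<times> orbit_set w"
    by (rule subset_antisym)
qed

lemma prod_minimal_iff_Sp_minimal:
  "subshift_on A X \<Longrightarrow> least_period p w \<Longrightarrow>
    minimal_system (shift_prod_top X (orbit_set w)) (X \<times> orbit_set w) prod_map \<longleftrightarrow>
    minimal_system shift_top X (shift ^^ p)"
  using Sp_minimal_if_prod_minimal prod_minimal_if_Sp_minimal by blast

section \<open>Conjugacy and recoding\<close>

lemma minimal_system_subtopology_iff: "minimal_system (subtopology T S) S f \<longleftrightarrow> minimal_system T S f"
  by (simp add: minimal_system_def subtopology_subtopology)

lemma conjugate_prod_minimal_iff:
  assumes SX: "shift ` X = X" and SV: "shift ` V = V" and conj: "conjugate_prod X V Y"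
  shows "minimal_system (shift_prod_top X V) (X \<times> V) prod_map \<longleftrightarrow> minimal_system shift_top Y shift"
proof -
  obtain h where h: "homeomorphic_map (shift_prod_top X V) (subtopology shift_top Y) h"
    and comm: "\<forall>z \<in> X \<times> V. h (prod_map z) = shift (h z)"
    using conj unfolding conjugate_prod_def by blast
  have "minimal_system (shift_prod_top X V) (topspace (shift_prod_top X V)) prod_map \<longleftrightarrow>
      minimal_system (subtopology shift_top Y) (topspace (subtopology shift_top Y)) shift"
    using prod_map_image[OF SX SV] comm by (intro minimal_system_conjugate_iff[OF h]) auto
  then show ?thesis
    by (simp add: minimal_system_subtopology_iff)
qed

definition pair_recoding :: "('a \<times> 'b \<Rightarrow> nat) \<Rightarrow> (int \<Rightarrow> 'a) \<times> (int \<Rightarrow> 'b) \<Rightarrow> int \<Rightarrow> nat" where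
  "pair_recoding c z = (\<lambda>n. c (fst z n, snd z n))"

lemma pair_recoding_prod_map: "pair_recoding c (prod_map z) = shift (pair_recoding c z)"
  by (simp add: pair_recoding_def prod_map_def shift_def)

lemma continuous_map_pair_recoding: "continuous_map (shift_prod_top X V) shift_top (pair_recoding c)"
  unfolding continuous_map_into_shift_top_iff
proof
  fix k
  have coordinates: "continuous_map (shift_prod_top X V) (discrete_topology UNIV) (\<lambda>z. fst z k)"
    "continuous_map (shift_prod_top X V) (discrete_topology UNIV) (\<lambda>z. snd z k)"
    using continuous_map_compose[OF continuous_map_fst
        continuous_map_from_subtopology[OF continuous_map_shift_top_coordinate]]
      continuous_map_compose[OF continuous_map_snd
        continuous_map_from_subtopology[OF continuous_map_shift_top_coordinate]]
    by (simp_all add: comp_def)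
  have "continuous_map (shift_prod_top X V) (prod_topology (discrete_topology UNIV) (discrete_topology UNIV))
      (\<lambda>z. (fst z k, snd z k))"
    by (rule continuous_map_pairedI[OF coordinates])
  then have "continuous_map (shift_prod_top X V) (discrete_topology UNIV) (\<lambda>z. (fst z k, snd z k))"
    by (simp add: prod_topology_discrete_topology[symmetric])
  moreover have "continuous_map (discrete_topology UNIV) (discrete_topology UNIV) c"
    by simp
  ultimately have "continuous_map (shift_prod_top X V) (discrete_topology UNIV) (c \<circ> (\<lambda>z. (fst z k, snd z k)))"
    by (rule continuous_map_compose)
  then show "continuous_map (shift_prod_top X V) (discrete_topology UNIV) (\<lambda>z. pair_recoding c z k)"
    by (simp add: pair_recoding_def comp_def)
qed

lemma inj_on_pair_recoding:
  assumes c: "inj_on c (A \<times> B)" and X: "\<forall>x\<in>X. range x \<subseteq> A" and V: "\<forall>v\<in>V. range v \<subseteq> B"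
  shows "inj_on (pair_recoding c) (X \<times> V)"
proof (rule inj_onI)
  fix z z' assume z: "z \<in> X \<times> V" "z' \<in> X \<times> V" "pair_recoding c z = pair_recoding c z'"
  have "(fst z n, snd z n) = (fst z' n, snd z' n)" for n
  proof (rule inj_onD[OF c])
    show "c (fst z n, snd z n) = c (fst z' n, snd z' n)"
      using fun_cong[OF z(3), of n] by (simp add: pair_recoding_def)
    have "x n \<in> A" if "x \<in> X" for x
      using X that by blast
    moreover have "v n \<in> B" if "v \<in> V" for v
      using V that by blast
    ultimately show "(fst z n, snd z n) \<in> A \<times> B" "(fst z' n, snd z' n) \<in> A \<times> B"
      using z(1,2) by (auto simp: mem_Times_iff)
  qed
  then show "z = z'"
    by (simp add: prod_eq_iff fun_eq_iff)
qed

lemma pair_recoding_conjugate_subshift: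
  fixes X :: "(int \<Rightarrow> 'a::finite) set"
  assumes X: "subshift_on UNIV X" and V: "finite V" "V \<noteq> {}" "shift ` V = V"
    and c: "inj_on c (UNIV \<times> B)" "\<forall>v\<in>V. range v \<subseteq> B"
  defines "Y \<equiv> pair_recoding c ` (X \<times> V)"
  shows "subshift_on (c ` (UNIV \<times> B)) Y" and "conjugate_prod X V Y"
proof -
  have closed: "closedin shift_top X" and SX: "shift ` X = X" and "X \<noteq> {}"
    using X by (simp_all add: subshift_on_def)
  have "compact_space (subtopology shift_top X)"
    using closedin_compact_space[OF compact_space_shift_top closed] by (simp add: compact_space_subtopology)
  moreover have "compact_space (subtopology shift_top V)"
    using V(1) by (simp add: compact_space_subtopology finite_imp_compactin)
  ultimately have compact: "compact_space (shift_prod_top X V)"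
    by (simp add: compact_space_prod_topology)
  have "continuous_map (shift_prod_top X V) (subtopology shift_top Y) (pair_recoding c)"
    using continuous_map_pair_recoding by (auto simp: continuous_map_in_subtopology Y_def)
  moreover have "inj_on (pair_recoding c) (X \<times> V)"
    using c by (intro inj_on_pair_recoding) auto
  ultimately have "homeomorphic_map (shift_prod_top X V) (subtopology shift_top Y) (pair_recoding c)"
    using compact Hausdorff_space_subtopology[OF Hausdorff_space_shift_top]
    by (intro continuous_imp_homeomorphic_map) (simp_all add: Y_def)
  then show "conjugate_prod X V Y"
    unfolding conjugate_prod_def by (intro exI[of _ "pair_recoding c"]) (simp add: pair_recoding_prod_map)
  have "compactin (shift_prod_top X V) (X \<times> V)"
    using compact by (simp add: compact_space_def)
  then have "compactin shift_top Y"
    unfolding Y_def by (rule image_compactin[OF _ continuous_map_pair_recoding])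
  then have "closedin shift_top Y"
    by (rule compactin_imp_closedin[OF Hausdorff_space_shift_top])
  moreover have "shift ` Y = pair_recoding c ` prod_map ` (X \<times> V)"
    by (simp add: Y_def image_image pair_recoding_prod_map)
  then have "shift ` Y = Y"
    using prod_map_image[OF SX V(3)] by (simp add: Y_def)
  moreover have "Y \<noteq> {}"
    using \<open>X \<noteq> {}\<close> V(2) by (simp add: Y_def)
  moreover have "\<forall>y\<in>Y. range y \<subseteq> c ` (UNIV \<times> B)"
    using c(2) by (auto simp: Y_def pair_recoding_def)
  ultimately show "subshift_on (c ` (UNIV \<times> B)) Y"
    by (simp add: subshift_on_def)
qed

section \<open>Averaged push-forward measures\<close>

definition subshift_borel :: "(int \<Rightarrow> 'a) set \<Rightarrow> (int \<Rightarrow> 'a) measure" where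
  "subshift_borel X = sigma X {U. openin (subtopology shift_top X) U}"

lemma opens_subshift_subset_Pow: "{U. openin (subtopology shift_top X) U} \<subseteq> Pow X"
  using openin_subset by fastforce

lemma space_subshift_borel [simp]: "space (subshift_borel X) = X"
  by (simp add: subshift_borel_def space_measure_of_conv)

lemma sets_subshift_borel: "sets (subshift_borel X) = sigma_sets X {U. openin (subtopology shift_top X) U}"
  by (simp add: subshift_borel_def sets_measure_of[OF opens_subshift_subset_Pow])

lemma sets_eq_subshift_borel: "shift_invariant_prob X \<nu> \<Longrightarrow> sets \<nu> = sets (subshift_borel X)"
  by (simp add: shift_invariant_prob_def sets_subshift_borel)

lemma cylinder_in_subshift_borel: "cylinder X u \<in> sets (subshift_borel X)"
  using openin_cylinder[of X u] by (simp add: sets_subshift_borel sigma_sets.Basic)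

lemma measurable_subshift_borel:
  assumes "continuous_map (subtopology shift_top X) (subtopology shift_top Y) f"
  shows "f \<in> subshift_borel X \<rightarrow>\<^sub>M subshift_borel Y"
  unfolding subshift_borel_def
proof (rule measurable_measure_of[OF opens_subshift_subset_Pow])
  show "f \<in> space (sigma X {U. openin (subtopology shift_top X) U}) \<rightarrow> Y"
    using assms by (auto simp: continuous_map_def space_measure_of_conv)
  fix U assume "U \<in> {U. openin (subtopology shift_top Y) U}"
  then have "openin (subtopology shift_top X) {x \<in> topspace (subtopology shift_top X). f x \<in> U}"
    by (intro openin_continuous_map_preimage[OF assms]) simp
  moreover have "f -` U \<inter> X = {x \<in> topspace (subtopology shift_top X). f x \<in> U}"
    by auto
  ultimately show "f -` U \<inter> space (sigma X {U. openin (subtopology shift_top X) U})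
      \<in> sets (sigma X {U. openin (subtopology shift_top X) U})"
    by (simp add: sets_measure_of[OF opens_subshift_subset_Pow] space_measure_of_conv sigma_sets.Basic)
qed

lemma measurable_shift_invariant_prob:
  assumes "shift_invariant_prob X \<nu>"
    and "continuous_map (subtopology shift_top X) (subtopology shift_top Y) f"
  shows "f \<in> \<nu> \<rightarrow>\<^sub>M subshift_borel Y"
  using measurable_subshift_borel[OF assms(2)] measurable_cong_sets[OF sets_eq_subshift_borel[OF assms(1)] refl]
  by blast

definition average_distr :: "nat \<Rightarrow> 'a measure \<Rightarrow> 'b measure \<Rightarrow> (nat \<Rightarrow> 'a \<Rightarrow> 'b) \<Rightarrow> 'b measure" where
  "average_distr p \<nu> M g = measure_pmf (pmf_of_set {..<p}) \<bind> (\<lambda>j. distr \<nu> M (g j))"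

lemma
  assumes \<nu>: "prob_space \<nu>" and p: "0 < p" and g: "\<And>j. g j \<in> \<nu> \<rightarrow>\<^sub>M M"
  shows sets_average_distr: "sets (average_distr p \<nu> M g) = sets M"
    and prob_space_average_distr: "prob_space (average_distr p \<nu> M g)"
    and emeasure_average_distr: "B \<in> sets M \<Longrightarrow>
      emeasure (average_distr p \<nu> M g) B = (\<Sum>j<p. emeasure \<nu> (g j -` B \<inter> space \<nu>)) / of_nat p"
proof -
  have prob: "prob_space (distr \<nu> M (g j))" for j
    by (rule prob_space.prob_space_distr[OF \<nu> g])
  have kernel: "(\<lambda>j. distr \<nu> M (g j)) \<in> measure_pmf (pmf_of_set {..<p}) \<rightarrow>\<^sub>M subprob_algebra M"
    by (simp add: space_subprob_algebra prob prob_space_imp_subprob_space)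
  show "sets (average_distr p \<nu> M g) = sets M"
    unfolding average_distr_def by (rule sets_bind) simp_all
  show "prob_space (average_distr p \<nu> M g)"
    unfolding average_distr_def by (rule measure_pmf.prob_space_bind[OF _ kernel]) (simp add: prob)
  assume B: "B \<in> sets M"
  have "{..<p} \<noteq> {}"
    using p by auto
  then show "emeasure (average_distr p \<nu> M g) B = (\<Sum>j<p. emeasure \<nu> (g j -` B \<inter> space \<nu>)) / of_nat p"
    unfolding average_distr_def emeasure_bind[OF _ kernel B, simplified]
    by (simp add: nn_integral_pmf_of_set emeasure_distr[OF g B])
qed

lemma sum_lessThan_Suc_periodic:
  fixes f :: "nat \<Rightarrow> 'a::comm_monoid_add"
  assumes "0 < p" "f p = f 0"
  shows "(\<Sum>j<p. f (Suc j)) = (\<Sum>j<p. f j)"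
proof -
  obtain q where q: "p = Suc q"
    using assms(1) gr0_implies_Suc by blast
  have "(\<Sum>j<p. f (Suc j)) = (\<Sum>j<q. f (Suc j)) + f 0"
    using assms(2) by (simp add: q)
  also have "\<dots> = (\<Sum>j<p. f j)"
    unfolding q sum.lessThan_Suc_shift by (simp add: add.commute)
  finally show ?thesis .
qed

lemma shift_invariant_prob_average_distr:
  assumes \<nu>: "shift_invariant_prob X \<nu>" and SX: "shift ` X \<subseteq> X" and SY: "shift ` Y \<subseteq> Y"
    and p: "0 < p"
    and g: "\<And>j. continuous_map (subtopology shift_top X) (subtopology shift_top Y) (g j)"
    and equivariant: "\<And>j x. x \<in> X \<Longrightarrow> shift (g j x) = g (Suc j) (shift x)"
    and periodic: "g p = g 0"
  shows "shift_invariant_prob Y (average_distr p \<nu> (subshift_borel Y) g)"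
proof -
  have prob: "prob_space \<nu>" and space: "space \<nu> = X"
    and invariant: "\<And>B. B \<in> sets \<nu> \<Longrightarrow> emeasure \<nu> (shift -` B \<inter> X) = emeasure \<nu> B"
    using \<nu> by (auto simp: shift_invariant_prob_def)
  have g_meas: "g j \<in> \<nu> \<rightarrow>\<^sub>M subshift_borel Y" for j
    using \<nu> g by (rule measurable_shift_invariant_prob)
  have g_Y: "g j x \<in> Y" if "x \<in> X" for j x
    using g[of j] that by (auto simp: continuous_map_def)
  have shift_meas: "shift \<in> subshift_borel Y \<rightarrow>\<^sub>M subshift_borel Y"
    using SY by (intro measurable_subshift_borel)
      (auto simp: continuous_map_in_subtopology continuous_map_from_subtopology continuous_map_shift)
  let ?\<mu> = "average_distr p \<nu> (subshift_borel Y) g"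
  have "emeasure ?\<mu> (shift -` B \<inter> Y) = emeasure ?\<mu> B" if B: "B \<in> sets (subshift_borel Y)" for B
  proof -
    have B': "shift -` B \<inter> Y \<in> sets (subshift_borel Y)"
      using measurable_sets[OF shift_meas B] by simp
    have step: "emeasure \<nu> (g j -` (shift -` B \<inter> Y) \<inter> X) = emeasure \<nu> (g (Suc j) -` B \<inter> X)" for j
    proof -
      have "g j -` (shift -` B \<inter> Y) \<inter> X = shift -` (g (Suc j) -` B \<inter> X) \<inter> X"
        using g_Y SX equivariant by auto
      then have "emeasure \<nu> (g j -` (shift -` B \<inter> Y) \<inter> X)
          = emeasure \<nu> (shift -` (g (Suc j) -` B \<inter> X) \<inter> X)"
        by (rule arg_cong)
      also have "\<dots> = emeasure \<nu> (g (Suc j) -` B \<inter> X)"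
        using measurable_sets[OF g_meas B] space by (intro invariant) simp
      finally show ?thesis .
    qed
    have "(\<Sum>j<p. emeasure \<nu> (g j -` (shift -` B \<inter> Y) \<inter> X)) = (\<Sum>j<p. emeasure \<nu> (g j -` B \<inter> X))"
      unfolding step using p
      by (rule sum_lessThan_Suc_periodic[where f = "\<lambda>j. emeasure \<nu> (g j -` B \<inter> X)"])
        (simp add: periodic)
    then show ?thesis
      by (simp add: emeasure_average_distr[OF prob p g_meas] B B' space)
  qed
  moreover have sets: "sets ?\<mu> = sets (subshift_borel Y)"
    by (rule sets_average_distr[OF prob p g_meas])
  moreover have "space ?\<mu> = Y"
    using sets_eq_imp_space_eq[OF sets] by simp
  ultimately show ?thesis
    unfolding shift_invariant_prob_def
    using prob_space_average_distr[OF prob p g_meas] by (simp add: sets_subshift_borel)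
qed

lemma measure_average_distr:
  assumes \<nu>: "prob_space \<nu>" and p: "0 < p" and g: "\<And>j. g j \<in> \<nu> \<rightarrow>\<^sub>M M" and B: "B \<in> sets M"
  shows "measure (average_distr p \<nu> M g) B = (\<Sum>j<p. measure \<nu> (g j -` B \<inter> space \<nu>)) / real p"
proof -
  have "emeasure (average_distr p \<nu> M g) B = ennreal ((\<Sum>j<p. measure \<nu> (g j -` B \<inter> space \<nu>)) / real p)"
    using p by (simp add: emeasure_average_distr[OF assms] finite_measure.emeasure_eq_measure[OF prob_space.finite_measure[OF \<nu>]]
        ennreal_of_nat_eq_real_of_nat divide_ennreal sum_nonneg)
  then show ?thesis
    by (simp add: measure_def sum_nonneg)
qed

lemma cylinder_prefix_subset_vimage:
  assumes block: "\<And>x x' i. x i = x' i \<Longrightarrow> g x i = g x' i" and g: "\<And>x. x \<in> X \<Longrightarrow> g x \<in> Y"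
    and x: "x \<in> X" "g x \<in> cylinder Y c" and n: "length c = n"
  shows "cylinder X (map (\<lambda>i. x (int i)) [0..<n]) \<subseteq> g -` cylinder Y c \<inter> X"
proof
  fix x' assume "x' \<in> cylinder X (map (\<lambda>i. x (int i)) [0..<n])"
  then have "x' \<in> X" and agree: "\<forall>i<n. x' (int i) = x (int i)"
    by (auto simp: cylinder_def)
  have "g x' (int i) = c ! i" if "i < length c" for i
  proof -
    have "g x' (int i) = g x (int i)"
      using agree that n by (intro block) simp
    also have "\<dots> = c ! i"
      using x(2) that by (simp add: cylinder_def)
    finally show ?thesis .
  qed
  then show "x' \<in> g -` cylinder Y c \<inter> X"
    using g[OF \<open>x' \<in> X\<close>] \<open>x' \<in> X\<close> by (simp add: cylinder_def)
qed

lemma measure_cylinder_average_distr_ge: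
  assumes \<nu>: "shift_invariant_prob X \<nu>" and p: "0 < p"
    and g: "\<And>j. continuous_map (subtopology shift_top X) (subtopology shift_top Y) (g j)"
    and onto: "Y \<subseteq> (\<Union>j<p. g j ` X)"
    and block: "\<And>j x x' i. x i = x' i \<Longrightarrow> g j x i = g j x' i"
    and c: "c \<in> language Y n"
  obtains u where "u \<in> language X n"
    "measure \<nu> (cylinder X u) / real p \<le> measure (average_distr p \<nu> (subshift_borel Y) g) (cylinder Y c)"
proof -
  have prob: "prob_space \<nu>" and space: "space \<nu> = X"
    using \<nu> by (simp_all add: shift_invariant_prob_def)
  have g_meas: "g j \<in> \<nu> \<rightarrow>\<^sub>M subshift_borel Y" for j
    using \<nu> g by (rule measurable_shift_invariant_prob)
  obtain y where y: "y \<in> cylinder Y c"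
    using c by (auto simp: language_def)
  then obtain j x where j: "j < p" "x \<in> X" "y = g j x"
    using onto by (auto simp: cylinder_def)
  define u where "u = map (\<lambda>i. x (int i)) [0..<n]"
  have "u \<in> language X n"
    using j(2) by (auto simp: language_def cylinder_def u_def)
  have "cylinder X u \<subseteq> g j -` cylinder Y c \<inter> X"
    unfolding u_def
  proof (rule cylinder_prefix_subset_vimage)
    show "g j x \<in> Y" if "x \<in> X" for x
      using g[of j] that by (auto simp: continuous_map_def)
    show "length c = n"
      using c by (simp add: language_def)
    show "x \<in> X"
      by (rule j(2))
    show "g j x \<in> cylinder Y c"
      using y j(3) by simp
  qed (rule block)
  then have "measure \<nu> (cylinder X u) \<le> measure \<nu> (g j -` cylinder Y c \<inter> X)"
    using measurable_sets[OF g_meas cylinder_in_subshift_borel] space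
    by (intro finite_measure.finite_measure_mono[OF prob_space.finite_measure[OF prob]]) simp_all
  also have "\<dots> \<le> (\<Sum>i<p. measure \<nu> (g i -` cylinder Y c \<inter> X))"
    using j(1) by (intro member_le_sum) auto
  finally have "measure \<nu> (cylinder X u) / real p \<le> (\<Sum>i<p. measure \<nu> (g i -` cylinder Y c \<inter> X)) / real p"
    by (simp add: divide_right_mono)
  also have "\<dots> = measure (average_distr p \<nu> (subshift_borel Y) g) (cylinder Y c)"
    using measure_average_distr[OF prob p g_meas cylinder_in_subshift_borel] space by simp
  finally show thesis
    using \<open>u \<in> language X n\<close> that by blast
qed

lemma boshernitzan_average_factor:
  assumes X: "subshift_on A X" "finite A" "boshernitzan X"
    and Y: "subshift_on B Y" "finite B" and p: "0 < p"
    and g: "\<And>j. continuous_map (subtopology shift_top X) (subtopology shift_top Y) (g j)"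
    and equivariant: "\<And>j x. x \<in> X \<Longrightarrow> shift (g j x) = g (Suc j) (shift x)"
    and periodic: "g p = g 0"
    and onto: "Y \<subseteq> (\<Union>j<p. g j ` X)"
    and block: "\<And>j x x' i. x i = x' i \<Longrightarrow> g j x i = g j x' i"
  shows "boshernitzan Y"
proof -
  obtain \<nu> where \<nu>: "shift_invariant_prob X \<nu>"
    and pos: "limsup (\<lambda>n. ereal (real n * Min ((\<lambda>u. measure \<nu> (cylinder X u)) ` language X n))) > 0"
    using X(3) unfolding boshernitzan_def by blast
  define \<mu> where "\<mu> = average_distr p \<nu> (subshift_borel Y) g"
  have \<mu>: "shift_invariant_prob Y \<mu>"
    unfolding \<mu>_def using \<nu> _ _ p g equivariant periodic
    by (rule shift_invariant_prob_average_distr) (use X(1) Y(1) in \<open>simp_all add: subshift_on_def\<close>)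
  define mX where "mX n = Min ((\<lambda>u. measure \<nu> (cylinder X u)) ` language X n)" for n
  define mY where "mY n = Min ((\<lambda>c. measure \<mu> (cylinder Y c)) ` language Y n)" for n
  have "finite (language Y n)" "language Y n \<noteq> {}" for n
    using Y by (auto simp: subshift_on_def language_nonempty intro: finite_language)
  then have "mX n / real p \<le> mY n" for n
    unfolding mY_def
  proof (subst Min_ge_iff, safe)
    fix c assume "c \<in> language Y n"
    then obtain u where "u \<in> language X n" "measure \<nu> (cylinder X u) / real p \<le> measure \<mu> (cylinder Y c)"
      unfolding \<mu>_def using measure_cylinder_average_distr_ge[OF \<nu> p g onto block] by blast
    moreover have "mX n \<le> measure \<nu> (cylinder X u)"
      unfolding mX_def using \<open>u \<in> language X n\<close> X(1,2)
      by (intro Min_le finite_imageI finite_language) (auto simp: subshift_on_def)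
    ultimately show "mX n / real p \<le> measure \<mu> (cylinder Y c)"
      by (meson divide_right_mono of_nat_0_le_iff order_trans)
  qed simp_all
  then have "real n * mX n / real p \<le> real n * mY n" for n
    using mult_left_mono[of "mX n / real p" "mY n" "real n"] by simp
  then have "limsup (\<lambda>n. ereal (real n * mX n)) * ereal (1 / real p) \<le> limsup (\<lambda>n. ereal (real n * mY n))"
    by (subst Limsup_ereal_mult_right[symmetric]) (auto intro!: Limsup_mono always_eventually)
  moreover have "0 < limsup (\<lambda>n. ereal (real n * mX n)) * ereal (1 / real p)"
    using pos p unfolding mX_def by (simp add: ereal_zero_less_0_iff)
  ultimately show ?thesis
    unfolding boshernitzan_def mY_def using \<mu> by fastforce
qed

section \<open>Boshernitzan property of the recoded product\<close>

lemma boshernitzan_pair_recoding: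
  fixes X :: "(int \<Rightarrow> 'a::finite) set" and w :: "int \<Rightarrow> 'b" and c :: "'a \<times> 'b \<Rightarrow> nat"
  defines "Y \<equiv> pair_recoding c ` (X \<times> orbit_set w)"
  assumes X: "subshift_on UNIV X" "boshernitzan X" and w: "least_period p w"
    and Y: "subshift_on A Y" "finite A"
  shows "boshernitzan Y"
proof (rule boshernitzan_average_factor[where g = "\<lambda>j x. pair_recoding c (x, (shift ^^ j) w)"])
  show "continuous_map (subtopology shift_top X) (subtopology shift_top Y)
      (\<lambda>x. pair_recoding c (x, (shift ^^ j) w))" for j
  proof -
    have "continuous_map (subtopology shift_top X) (shift_prod_top X (orbit_set w)) (\<lambda>x. (x, (shift ^^ j) w))"
      using shift_pow_in_orbit_set[of j w]
      by (intro continuous_map_pairedI) (simp_all add: continuous_map_id[unfolded id_def])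
    then have "continuous_map (subtopology shift_top X) shift_top (\<lambda>x. pair_recoding c (x, (shift ^^ j) w))"
      using continuous_map_compose[OF _ continuous_map_pair_recoding] by (simp add: comp_def)
    then show ?thesis
      using shift_pow_in_orbit_set[of j w] by (auto simp: continuous_map_in_subtopology Y_def)
  qed
  show "shift (pair_recoding c (x, (shift ^^ j) w)) = pair_recoding c (shift x, (shift ^^ Suc j) w)" for j x
    by (simp add: pair_recoding_prod_map[symmetric] prod_map_def)
  show "(\<lambda>x. pair_recoding c (x, (shift ^^ p) w)) = (\<lambda>x. pair_recoding c (x, (shift ^^ 0) w))"
    using least_period_shift_pow[OF w] by simp
  show "Y \<subseteq> (\<Union>j<p. (\<lambda>x. pair_recoding c (x, (shift ^^ j) w)) ` X)"
    unfolding Y_def orbit_set_least_period[OF w] by auto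
  show "pair_recoding c (x, (shift ^^ j) w) i = pair_recoding c (x', (shift ^^ j) w) i"
    if "x i = x' i" for j x x' i
    using that by (simp add: pair_recoding_def)
qed (use X Y w in \<open>simp_all add: least_period_def\<close>)

lemma exists_Boshernitzan_conjugate_if_prod_minimal:
  fixes X :: "(int \<Rightarrow> 'a::finite) set" and w :: "int \<Rightarrow> 'b"
  assumes X: "subshift_on UNIV X" "boshernitzan X" and w: "least_period p w"
    and min: "minimal_system (shift_prod_top X (orbit_set w)) (X \<times> orbit_set w) prod_map"
  shows "\<exists>(A::nat set) Y. finite A \<and> subshift_on A Y \<and> minimal_system shift_top Y shift \<and>
    boshernitzan Y \<and> conjugate_prod X (orbit_set w) Y"
proof -
  define c where "c = to_nat_on (UNIV \<times> range w :: ('a \<times> 'b) set)"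
  define Y where "Y = pair_recoding c ` (X \<times> orbit_set w)"
  have "finite (UNIV \<times> range w :: ('a \<times> 'b) set)"
    using finite_range_least_period[OF w] by simp
  then have "inj_on c (UNIV \<times> range w)" and alphabet: "finite (c ` (UNIV \<times> range w))"
    unfolding c_def by (auto intro: inj_on_to_nat_on countable_finite)
  moreover have "orbit_set w \<noteq> {}"
    using shift_pow_in_orbit_set by blast
  moreover have "\<forall>v\<in>orbit_set w. range v \<subseteq> range w"
    using range_orbit_set by blast
  ultimately have Y: "subshift_on (c ` (UNIV \<times> range w)) Y" "conjugate_prod X (orbit_set w) Y"
    unfolding Y_def
    using pair_recoding_conjugate_subshift[OF X(1) finite_orbit_set[OF w] _ shift_image_orbit_set]
    by simp_all
  have "shift ` X = X"
    using X(1) by (simp add: subshift_on_def)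
  then have "minimal_system shift_top Y shift"
    using min conjugate_prod_minimal_iff[OF _ shift_image_orbit_set Y(2)] by simp
  moreover have "boshernitzan Y"
    using X w Y(1) alphabet unfolding Y_def by (rule boshernitzan_pair_recoding)
  ultimately show ?thesis
    using Y alphabet by blast
qed

theorem theorem3p9:
  fixes X :: "(int \<Rightarrow> 'a::finite) set" and w :: "int \<Rightarrow> 'b" and p :: nat
  assumes "subshift_on UNIV X"
    and "minimal_system shift_top X shift"
    and "boshernitzan X"
    and "least_period p w"
  shows "((\<exists>(A::nat set) Y. finite A \<and> subshift_on A Y \<and> minimal_system shift_top Y shift \<and>
              boshernitzan Y \<and> conjugate_prod X (orbit_set w) Y)
          \<longleftrightarrow> minimal_system (prod_topology (subtopology shift_top X) (subtopology shift_top (orbit_set w)))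
                (X \<times> orbit_set w) prod_map)
       \<and> (minimal_system (prod_topology (subtopology shift_top X) (subtopology shift_top (orbit_set w)))
                (X \<times> orbit_set w) prod_map
          \<longleftrightarrow> num_Sp_components p X = 1)
       \<and> (num_Sp_components p X = 1
          \<longleftrightarrow> (\<forall>k::int. topological_eigenvalue X (cis (2 * pi * real_of_int k / real p))
                         \<longrightarrow> cis (2 * pi * real_of_int k / real p) = 1))"
proof -
  have SX: "shift ` X = X"
    using assms(1) by (simp add: subshift_on_def)
  have "(\<exists>(A::nat set) Y. finite A \<and> subshift_on A Y \<and> minimal_system shift_top Y shift \<and>
      boshernitzan Y \<and> conjugate_prod X (orbit_set w) Y)
    \<longleftrightarrow> minimal_system (shift_prod_top X (orbit_set w)) (X \<times> orbit_set w) prod_map"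
    using conjugate_prod_minimal_iff[OF SX shift_image_orbit_set]
      exists_Boshernitzan_conjugate_if_prod_minimal[OF assms(1,3,4)] by blast
  moreover have "minimal_system (shift_prod_top X (orbit_set w)) (X \<times> orbit_set w) prod_map
    \<longleftrightarrow> num_Sp_components p X = 1"
    using prod_minimal_iff_Sp_minimal[OF assms(1,4)] num_Sp_components_eq_1_iff[OF assms(1,2)] by simp
  moreover have "0 < p"
    using assms(4) by (simp add: least_period_def)
  ultimately show ?thesis
    using num_Sp_components_eq_1_iff_no_eigenvalue[OF assms(1,2)] by simp
qed

end
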